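(* Let $\mathbb{K}$ be a finite reduced formal context. Then $\mathcal{CDB}(BC(\mathbb{K}))=\{A\to A^{\bullet}\mid A\to A^{\bullet}\in\mathcal{CDB}(\mathbb{K})\text{ and }|A|=1\}$, i.e. the canonical direct basis of the Birkhoff completion of $\mathbb{K}$ consists exactly of the implications of the canonical direct basis of $\mathbb{K}$ whose premise is a singleton.
   Context: For a formal context $(G,M,I)$, derivation: $A'=\{m\in M\mid\forall g\in A:(g,m)\in I\}$, $B'=\{g\in G\mid\forall m\in B:(g,m)\in I\}$. A context is reduced if no object $g$ has $\{g\}'=X'$ for some $X\subseteq G$ with $g\notin X$, and no attribute $m$ has $\{m\}'=X'$ for some $X\subseteq M$ with $m\notin X$. For $A\subseteq M$, $A^{\bullet}:=A''\setminus\big(A\cup\bigcup_{n\in A}(A\setminus\{n\})''\big)$; $A$ is a proper premise if $A^{\bullet}\ne\emptyset$. The canonical direct basis $\mathcal{CDB}(\mathbb{K})$ is the set of implications $A\to A^{\bullet}$ for all proper premises $A$ of $\mathbb{K}$ (with $A^\bullet$ computed in that context). For $m,n\in M$, $m\ge_{\mathbb{K}}n$ iff $\{m\}'\supseteq\{n\}'$. Let $\mathcal{M}(M)$ be the set of attributes whose attribute concept $(\{m\}',\{m\}'')$ is meet-irreducible in the concept lattice, and $\overline{\mathcal{M}(M)}=\{\overline m\mid m\in\mathcal{M}(M)\}$ new elements. The Birkhoff completion is $BC(\mathbb{K}):=\big(G\cup\overline{\mathcal{M}(M)},M,I\cup\{(\overline m,n)\in\overline{\mathcal{M}(M)}\times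 M\mid m\not\ge_{\mathbb{K}}n\}\big)$. *)

theory Defs
  imports Main
begin

type_synonym ('g, 'm) fcontext = "'g set \<times> 'm set \<times> ('g \<times> 'm) set"

definition objs :: "('g, 'm) fcontext \<Rightarrow> 'g set" where "objs K = fst K"
definition atts :: "('g, 'm) fcontext \<Rightarrow> 'm set" where "atts K = fst (snd K)"
definition inc :: "('g, 'm) fcontext \<Rightarrow> ('g \<times> 'm) set" where "inc K = snd (snd K)"

definition is_context :: "('g, 'm) fcontext \<Rightarrow> bool" where
  "is_context K \<longleftrightarrow> inc K \<subseteq> objs K \<times> atts K"

definition intent :: "('g, 'm) fcontext \<Rightarrow> 'g set \<Rightarrow> 'm set" where
  "intent K A = {m \<in> atts K. \<forall>g\<in>A. (g, m) \<in> inc K}"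

definition extent :: "('g, 'm) fcontext \<Rightarrow> 'm set \<Rightarrow> 'g set" where
  "extent K B = {g \<in> objs K. \<forall>m\<in>B. (g, m) \<in> inc K}"

definition aclosure :: "('g, 'm) fcontext \<Rightarrow> 'm set \<Rightarrow> 'm set" where
  "aclosure K B = intent K (extent K B)"

definition reduced :: "('g, 'm) fcontext \<Rightarrow> bool" where
  "reduced K \<longleftrightarrow>
     \<not> (\<exists>g\<in>objs K. \<exists>X. X \<subseteq> objs K \<and> g \<notin> X \<and> intent K {g} = intent K X) \<and>
     \<not> (\<exists>m\<in>atts K. \<exists>X. X \<subseteq> atts K \<and> m \<notin> X \<and> extent K {m} = extent K X)"

definition bullet :: "('g, 'm) fcontext \<Rightarrow> 'm set \<Rightarrow> 'm set" where
  "bullet K A = aclosure K A - (A \<union> (\<Union>n\<in>A. aclosure K (A - {n})))"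

definition proper_premise :: "('g, 'm) fcontext \<Rightarrow> 'm set \<Rightarrow> bool" where
  "proper_premise K A \<longleftrightarrow> A \<subseteq> atts K \<and> bullet K A \<noteq> {}"

definition CDB :: "('g, 'm) fcontext \<Rightarrow> ('m set \<times> 'm set) set" where
  "CDB K = {(A, bullet K A) | A. proper_premise K A}"

definition att_ge :: "('g, 'm) fcontext \<Rightarrow> 'm \<Rightarrow> 'm \<Rightarrow> bool" where
  "att_ge K m n \<longleftrightarrow> extent K {m} \<supseteq> extent K {n}"

definition concepts :: "('g, 'm) fcontext \<Rightarrow> ('g set \<times> 'm set) set" where
  "concepts K = {(A, B). A \<subseteq> objs K \<and> B \<subseteq> atts K \<and> intent K A = B \<and> extent K B = A}"

definition concept_le :: "('g set \<times> 'm set) \<Rightarrow> ('g set \<times> 'm set) \<Rightarrow> bool" where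
  "concept_le x y \<longleftrightarrow> fst x \<subseteq> fst y"

definition is_meet :: "('g, 'm) fcontext \<Rightarrow> ('g set \<times> 'm set) \<Rightarrow> ('g set \<times> 'm set) \<Rightarrow> ('g set \<times> 'm set) \<Rightarrow> bool" where
  "is_meet K x y z \<longleftrightarrow> x \<in> concepts K \<and> concept_le x y \<and> concept_le x z \<and>
     (\<forall>w\<in>concepts K. concept_le w y \<and> concept_le w z \<longrightarrow> concept_le w x)"

definition meet_irreducible :: "('g, 'm) fcontext \<Rightarrow> ('g set \<times> 'm set) \<Rightarrow> bool" where
  "meet_irreducible K x \<longleftrightarrow> x \<in> concepts K \<and> (\<exists>y\<in>concepts K. \<not> concept_le y x) \<and>
     (\<forall>y\<in>concepts K. \<forall>z\<in>concepts K. is_meet K x y z \<longrightarrow> x = y \<or> x = z)"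

definition attr_concept :: "('g, 'm) fcontext \<Rightarrow> 'm \<Rightarrow> 'g set \<times> 'm set" where
  "attr_concept K m = (extent K {m}, aclosure K {m})"

definition MI :: "('g, 'm) fcontext \<Rightarrow> 'm set" where
  "MI K = {m \<in> atts K. meet_irreducible K (attr_concept K m)}"

text \<open>Birkhoff completion: new objects \<open>m\<close>-bar are encoded as \<open>Inr m\<close>, old objects as \<open>Inl g\<close>.\<close>
definition BC :: "('g, 'm) fcontext \<Rightarrow> ('g + 'm, 'm) fcontext" where
  "BC K = (Inl ` objs K \<union> Inr ` MI K, atts K,
           {(Inl g, m) | g m. (g, m) \<in> inc K} \<union>
           {(Inr m, n) | m n. m \<in> MI K \<and> n \<in> atts K \<and> \<not> att_ge K m n})"

end

theory Submission
  imports Defs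
begin

text \<open>In a reduced context every attribute concept is meet-irreducible (an attribute whose
  extent is the intersection of two larger extents would be reducible), so the Birkhoff
  completion adds one object \<open>m\<close>-bar for every attribute \<open>m\<close>, having exactly the attributes
  not above \<open>m\<close>. These new objects make the closure of a set \<open>B\<close> the union of the up-sets
  of its elements. Hence closure in \<open>BC K\<close> distributes over unions, so no premise with two
  or more elements is proper, while on singletons and the empty set the closures in
  \<open>K\<close> and \<open>BC K\<close> agree.\<close>

lemma extent_intent_extent:
  "B \<subseteq> atts K \<Longrightarrow> extent K (intent K (extent K B)) = extent K B"
  by (auto simp: extent_def intent_def)

lemma concept_of_attributes:
  "B \<subseteq> atts K \<Longrightarrow> (extent K B, intent K (extent K B)) \<in> concepts K"
  using extent_intent_extent[of B K] by (auto simp: concepts_def extent_def intent_def)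

lemma attr_concept_in_concepts: "m \<in> atts K \<Longrightarrow> attr_concept K m \<in> concepts K"
  using concept_of_attributes[of "{m}" K] by (simp add: attr_concept_def aclosure_def)

lemma concept_eqI: "x \<in> concepts K \<Longrightarrow> y \<in> concepts K \<Longrightarrow> fst x = fst y \<Longrightarrow> x = y"
  by (auto simp: concepts_def)

lemma reduced_extent_eq_imp_mem:
  assumes "reduced K" "m \<in> atts K" "X \<subseteq> atts K" "extent K {m} = extent K X"
  shows "m \<in> X"
  using assms unfolding reduced_def by blast

lemma aclosure_empty_if_reduced: "reduced K \<Longrightarrow> aclosure K {} = {}"
  using reduced_extent_eq_imp_mem[of K _ "{}"]
  by (auto simp: aclosure_def intent_def extent_def)

lemma aclosure_singleton: "a \<in> atts K \<Longrightarrow> aclosure K {a} = {n \<in> atts K. att_ge K n a}"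
  by (auto simp: aclosure_def intent_def extent_def att_ge_def)

lemma extent_Un: "extent K (A \<union> B) = extent K A \<inter> extent K B"
  by (auto simp: extent_def)

lemma extent_Un_concepts:
  "y \<in> concepts K \<Longrightarrow> z \<in> concepts K \<Longrightarrow> extent K (snd y \<union> snd z) = fst y \<inter> fst z"
  by (auto simp: concepts_def extent_Un)

lemma concept_extent_subset:
  "y \<in> concepts K \<Longrightarrow> m \<in> snd y \<Longrightarrow> fst y \<subseteq> extent K {m}"
  by (auto simp: concepts_def extent_def intent_def)

lemma extent_is_meet:
  assumes meet: "is_meet K x y z" and y: "y \<in> concepts K" and z: "z \<in> concepts K"
  shows "fst x = fst y \<inter> fst z"
proof -
  note intersection = extent_Un_concepts[OF y z]
  have "snd y \<union> snd z \<subseteq> atts K"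
    using y z by (auto simp: concepts_def)
  then have "(fst y \<inter> fst z, intent K (fst y \<inter> fst z)) \<in> concepts K"
    using concept_of_attributes intersection by metis
  moreover have "\<forall>w\<in>concepts K. fst w \<subseteq> fst y \<and> fst w \<subseteq> fst z \<longrightarrow> fst w \<subseteq> fst x"
    using meet by (simp add: is_meet_def concept_le_def)
  ultimately have "fst y \<inter> fst z \<subseteq> fst x"
    by fastforce
  with meet show ?thesis
    by (auto simp: is_meet_def concept_le_def)
qed

lemma meet_irreducible_attr_concept:
  assumes red: "reduced K" and m: "m \<in> atts K"
  shows "meet_irreducible K (attr_concept K m)"
proof -
  let ?x = "attr_concept K m"
  have top: "(objs K, intent K (objs K)) \<in> concepts K"
    by (auto simp: concepts_def extent_def intent_def)
  have "extent K {m} \<noteq> extent K {}"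
    using reduced_extent_eq_imp_mem[OF red m] by blast
  then have not_top: "\<not> concept_le (objs K, intent K (objs K)) ?x"
    by (auto simp: concept_le_def attr_concept_def extent_def)
  have "?x = y \<or> ?x = z"
    if y: "y \<in> concepts K" and z: "z \<in> concepts K" and meet: "is_meet K ?x y z" for y z
  proof -
    have "extent K {m} = extent K (snd y \<union> snd z)"
      using extent_is_meet[OF meet y z] extent_Un_concepts[OF y z] by (simp add: attr_concept_def)
    moreover have "snd y \<union> snd z \<subseteq> atts K"
      using y z by (auto simp: concepts_def)
    ultimately have "m \<in> snd y \<or> m \<in> snd z"
      using reduced_extent_eq_imp_mem[OF red m] by blast
    then have "fst ?x = fst y \<or> fst ?x = fst z"
      using extent_is_meet[OF meet y z] concept_extent_subset[OF y, of m]
        concept_extent_subset[OF z, of m] unfolding attr_concept_def fst_conv by blast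
    then show ?thesis
      using concept_eqI[OF attr_concept_in_concepts[OF m]] y z by blast
  qed
  then show ?thesis
    using attr_concept_in_concepts[OF m] top not_top by (auto simp: meet_irreducible_def)
qed

lemma MI_eq_atts_if_reduced: "reduced K \<Longrightarrow> MI K = atts K"
  using meet_irreducible_attr_concept[of K] by (auto simp: MI_def)

lemma atts_BC [simp]: "atts (BC K) = atts K"
  by (simp add: BC_def atts_def)

lemma Inl_in_extent_BC:
  "Inl g \<in> extent (BC K) B \<longleftrightarrow> g \<in> extent K B"
  by (auto simp: BC_def extent_def objs_def inc_def)

lemma Inr_in_extent_BC:
  "Inr m \<in> extent (BC K) B \<longleftrightarrow> m \<in> MI K \<and> B \<subseteq> atts K \<and> (\<forall>b\<in>B. \<not> att_ge K m b)"
  by (auto simp: BC_def extent_def objs_def inc_def MI_def)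

lemma inc_BC_Inl: "(Inl g, m) \<in> inc (BC K) \<longleftrightarrow> (g, m) \<in> inc K"
  by (auto simp: BC_def inc_def)

lemma inc_BC_Inr:
  "(Inr m, n) \<in> inc (BC K) \<longleftrightarrow> m \<in> MI K \<and> n \<in> atts K \<and> \<not> att_ge K m n"
  by (auto simp: BC_def inc_def)

lemma mem_UN_aclosure_singleton:
  "B \<subseteq> atts K \<Longrightarrow> n \<in> (\<Union>b\<in>B. aclosure K {b}) \<longleftrightarrow> n \<in> atts K \<and> (\<exists>b\<in>B. att_ge K n b)"
  using aclosure_singleton[of _ K] by blast

lemma aclosure_BC:
  assumes red: "reduced K" and B: "B \<subseteq> atts K"
  shows "aclosure (BC K) B = (\<Union>b\<in>B. aclosure K {b})"
proof (intro set_eqI iffI)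
  fix n assume n: "n \<in> aclosure (BC K) B"
  then have n_att: "n \<in> atts K"
    by (simp add: aclosure_def intent_def)
  have "\<exists>b\<in>B. att_ge K n b"
  proof (rule ccontr)
    assume "\<not> (\<exists>b\<in>B. att_ge K n b)"
    then have "Inr n \<in> extent (BC K) B"
      using MI_eq_atts_if_reduced[OF red] n_att B by (simp add: Inr_in_extent_BC)
    then have "(Inr n, n) \<in> inc (BC K)"
      using n by (auto simp: aclosure_def intent_def)
    then show False
      by (simp add: inc_BC_Inr att_ge_def)
  qed
  then show "n \<in> (\<Union>b\<in>B. aclosure K {b})"
    using n_att mem_UN_aclosure_singleton[OF B] by blast
next
  fix n assume "n \<in> (\<Union>b\<in>B. aclosure K {b})"
  then obtain b where b: "b \<in> B" and n_att: "n \<in> atts K" and ge: "att_ge K n b"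
    using mem_UN_aclosure_singleton[OF B] by blast
  have "(x, n) \<in> inc (BC K)" if x: "x \<in> extent (BC K) B" for x
  proof (cases x)
    case (Inl g)
    then have "g \<in> extent K B"
      using x by (simp add: Inl_in_extent_BC)
    then have "g \<in> extent K {n}"
      using b ge by (auto simp: att_ge_def extent_def)
    then show ?thesis
      using Inl by (simp add: inc_BC_Inl extent_def)
  next
    case (Inr m)
    then have "m \<in> MI K" "\<not> att_ge K m b"
      using x b by (simp_all add: Inr_in_extent_BC)
    then show ?thesis
      using Inr n_att ge by (auto simp: inc_BC_Inr att_ge_def)
  qed
  then show "n \<in> aclosure (BC K) B"
    using n_att by (simp add: aclosure_def intent_def)
qed

lemma bullet_BC_singleton:
  assumes red: "reduced K" and a: "a \<in> atts K"
  shows "bullet (BC K) {a} = bullet K {a}"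
  using aclosure_BC[OF red, of "{a}"] aclosure_BC[OF red, of "{}"] a
    aclosure_empty_if_reduced[OF red]
  by (simp add: bullet_def)

lemma bullet_BC_eq_empty:
  assumes red: "reduced K" and A: "A \<subseteq> atts K" and not_singleton: "\<nexists>a. A = {a}"
  shows "bullet (BC K) A = {}"
proof (rule equals0I)
  fix x assume x: "x \<in> bullet (BC K) A"
  then obtain c where c: "c \<in> A" and x_cl: "x \<in> aclosure K {c}"
    using aclosure_BC[OF red A] by (auto simp: bullet_def)
  obtain d where d: "d \<in> A" "d \<noteq> c"
    using not_singleton c by blast
  have "x \<in> aclosure (BC K) (A - {d})"
    using aclosure_BC[OF red, of "A - {d}"] A c d x_cl by blast
  with x d show False
    by (auto simp: bullet_def)
qed

lemma proper_premise_BC_iff: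
  assumes red: "reduced K"
  shows "proper_premise (BC K) A \<longleftrightarrow> (\<exists>a. A = {a} \<and> proper_premise K {a})"
proof (cases "\<exists>a. A = {a}")
  case True
  then show ?thesis
    using bullet_BC_singleton[OF red] by (auto simp: proper_premise_def)
next
  case False
  then show ?thesis
    using bullet_BC_eq_empty[OF red, of A] by (auto simp: proper_premise_def)
qed

theorem mainTheorem8:
  fixes K :: "('g, 'm) fcontext"
  assumes "is_context K" and "finite (objs K)" and "finite (atts K)" and "reduced K"
  shows "CDB (BC K) = {(A, B). (A, B) \<in> CDB K \<and> card A = 1}"
proof -
  have "CDB (BC K) = {({a}, bullet K {a}) | a. proper_premise K {a}}"
    using proper_premise_BC_iff[OF \<open>reduced K\<close>] bullet_BC_singleton[OF \<open>reduced K\<close>]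
    by (fastforce simp: CDB_def proper_premise_def)
  also have "\<dots> = {(A, B). (A, B) \<in> CDB K \<and> card A = 1}"
    by (auto simp: CDB_def card_1_singleton_iff)
  finally show ?thesis .
qed

end
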